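(* Let $G$ be a group generated by $x_1,\dots,x_n$, with finite commutator subgroup $C=[G,G]$, such that $G/C$ is free abelian of rank $n$ with basis the images of $x_1,\dots,x_n$. Let $Z$ be the center of $G$ and $Z_{CG}=Z\cap C$. Then there is a subgroup $\widetilde Z\le Z$ with $\widetilde Z\cong\mathbb Z^n$ and $\widetilde Z\cap Z_{CG}$ trivial such that $Z=\widetilde Z\,Z_{CG}$ (a direct product). Moreover $\mathrm{rank}(Z)=n+\mathrm{rank}(Z_{CG})$.
   Context: The rank of a group is the minimal cardinality of a generating set. *)

theory Defs
  imports "HOL-Algebra.Algebra"
begin

definition group_center :: "('a, 'b) monoid_scheme \<Rightarrow> 'a set" where
  "group_center G = {z \<in> carrier G. \<forall>g \<in> carrier G. z \<otimes>\<^bsub>G\<^esub> g = g \<otimes>\<^bsub>G\<^esub> z}"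

definition free_abelian_basis :: "('a, 'b) monoid_scheme \<Rightarrow> (nat \<Rightarrow> 'a) \<Rightarrow> nat \<Rightarrow> bool" where
  "free_abelian_basis H b n \<longleftrightarrow> comm_group H \<and> (\<forall>i<n. b i \<in> carrier H) \<and>
     (\<forall>y \<in> carrier H. \<exists>!k :: nat \<Rightarrow> int. (\<forall>i\<ge>n. k i = 0) \<and>
        y = finprod H (\<lambda>i. b i [^]\<^bsub>H\<^esub> k i) {..<n})"

definition group_rank :: "('a, 'b) monoid_scheme \<Rightarrow> 'a set \<Rightarrow> nat" where
  "group_rank G H = (LEAST k. \<exists>S. S \<subseteq> H \<and> finite S \<and> card S = k \<and> generate G S = H)"

end

theory Submission
  imports Defs "HOL-Library.Function_Algebras"
begin

text \<open>Write \<open>C\<close> for the commutator subgroup and \<open>Z\<close> for the centre. The coordinates of the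
  coset \<open>C g\<close> in the basis \<open>C x\<^sub>1, ..., C x\<^sub>n\<close> of \<open>G/C\<close> define a surjective
  homomorphism \<open>\<kappa> : G \<rightarrow> \<int>\<^sup>n\<close> with kernel \<open>C\<close>. As \<open>C\<close> is finite, the conjugates of any \<open>y\<close> by
  the powers of \<open>g\<close> lie in the finite coset \<open>C y\<close>, so a nonzero power of \<open>g\<close> commutes with
  \<open>y\<close>; taking \<open>y\<close> among the generators, a nonzero power of every element is central. Hence
  \<open>\<kappa>(Z)\<close> is a sublattice of full rank \<open>n\<close>. Lifting a basis of it to \<open>Z\<close> gives a free abelian
  subgroup of rank \<open>n\<close> complementing \<open>Z \<inter> C\<close>, the kernel of \<open>\<kappa>\<close> on \<open>Z\<close>.

  For the rank, these lifts together with a minimal generating set of \<open>Z \<inter> C\<close> generate \<open>Z\<close>.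
  Conversely, from any finite generating set of \<open>Z\<close>, running Euclid's algorithm on the values
  of one coordinate of \<open>\<kappa>\<close> at a time discards \<open>n\<close> generators and leaves a generating set
  of \<open>Z \<inter> C\<close>.\<close>

section \<open>Full-rank lattices of integer vectors\<close>

definition int_lincomb :: "nat \<Rightarrow> (nat \<Rightarrow> int) \<Rightarrow> (nat \<Rightarrow> nat \<Rightarrow> int) \<Rightarrow> nat \<Rightarrow> int" where
  "int_lincomb n a v = (\<lambda>j. \<Sum>i<n. a i * v i j)"

lemma int_lincomb_cong: "\<forall>i<n. v i = w i \<Longrightarrow> int_lincomb n a v = int_lincomb n a w"
  by (simp add: int_lincomb_def)

lemma int_lincomb_zero [simp]: "int_lincomb n 0 v = 0"
  by (simp add: int_lincomb_def zero_fun_def)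

lemma int_lincomb_Suc: "int_lincomb (Suc n) a v = int_lincomb n a v + (\<lambda>j. a n * v n j)"
  by (simp add: int_lincomb_def fun_eq_iff)

lemma int_lincomb_upd_out_of_range [simp]:
  assumes "n \<le> m"
  shows "int_lincomb n (a(m := c)) v = int_lincomb n a v" "int_lincomb n a (v(m := u)) = int_lincomb n a v"
  using assms by (simp_all add: int_lincomb_def)

lemma int_lattice_scale_closed:
  fixes L :: "(nat \<Rightarrow> int) set"
  assumes zero: "0 \<in> L" and add: "\<And>u w. u \<in> L \<Longrightarrow> w \<in> L \<Longrightarrow> u + w \<in> L"
    and neg: "\<And>u. u \<in> L \<Longrightarrow> - u \<in> L" and "u \<in> L"
  shows "(\<lambda>j. q * u j) \<in> L"
proof -
  have nat_scale: "(\<lambda>j. int k * u j) \<in> L" for k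
  proof (induction k)
    case 0
    then show ?case using zero by (simp add: zero_fun_def)
  next
    case (Suc k)
    then have "(\<lambda>j. int k * u j) + u \<in> L" using add \<open>u \<in> L\<close> by blast
    then show ?case by (simp add: plus_fun_def algebra_simps)
  qed
  show ?thesis
  proof (cases "q \<ge> 0")
    case True
    then show ?thesis using nat_scale[of "nat q"] by simp
  next
    case False
    then have "- (\<lambda>j. int (nat (- q)) * u j) \<in> L" using neg nat_scale by blast
    then show ?thesis using False by (simp add: fun_Compl_def)
  qed
qed

lemma int_lattice_coordinate_generator:
  fixes L :: "(nat \<Rightarrow> int) set"
  assumes zero: "0 \<in> L" and add: "\<And>u w. u \<in> L \<Longrightarrow> w \<in> L \<Longrightarrow> u + w \<in> L"
    and neg: "\<And>u. u \<in> L \<Longrightarrow> - u \<in> L" and "w\<^sub>0 \<in> L" "w\<^sub>0 m \<noteq> 0"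
  obtains u where "u \<in> L" "u m > 0" "\<And>w. w \<in> L \<Longrightarrow> u m dvd w m"
proof -
  let ?P = "\<lambda>d::nat. d > 0 \<and> (\<exists>w\<in>L. w m = int d)"
  have "?P (nat \<bar>w\<^sub>0 m\<bar>)"
    using assms(4,5) neg[OF assms(4)] by (cases "w\<^sub>0 m > 0") (auto simp: fun_Compl_def intro!: bexI)
  then have "?P (Least ?P)" by (rule LeastI)
  then obtain u where u: "u \<in> L" "u m = int (Least ?P)" "Least ?P > 0" by blast
  have "u m dvd w m" if w: "w \<in> L" for w
  proof -
    define r where "r = w + (\<lambda>j. - (w m div u m) * u j)"
    have rL: "r \<in> L"
      unfolding r_def by (rule add[OF w int_lattice_scale_closed[OF zero add neg u(1)]])
    have rm: "r m = w m mod u m"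
      by (simp add: r_def minus_div_mult_eq_mod[symmetric] algebra_simps)
    have lt: "w m mod u m < u m" and ge: "0 \<le> w m mod u m" using u(2,3) by simp_all
    have "Least ?P \<le> nat (w m mod u m)" if "w m mod u m \<noteq> 0"
      using rL rm that ge by (intro Least_le) (auto intro!: bexI[of _ r])
    then show ?thesis using u(2) lt ge by (fastforce simp: dvd_eq_mod_eq_0)
  qed
  then show ?thesis using that u by simp
qed

definition int_lattice_basis :: "nat \<Rightarrow> (nat \<Rightarrow> int) set \<Rightarrow> (nat \<Rightarrow> nat \<Rightarrow> int) \<Rightarrow> bool" where
  "int_lattice_basis n L v \<longleftrightarrow> (\<forall>i<n. v i \<in> L) \<and> (\<forall>w\<in>L. \<exists>a. w = int_lincomb n a v)
     \<and> (\<forall>a b. int_lincomb n a v = int_lincomb n b v \<longrightarrow> (\<forall>i<n. a i = b i))"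

lemma int_lattice_basis_extend:
  fixes L :: "(nat \<Rightarrow> int) set"
  assumes zero: "0 \<in> L" and add: "\<And>u w. u \<in> L \<Longrightarrow> w \<in> L \<Longrightarrow> u + w \<in> L"
    and neg: "\<And>u. u \<in> L \<Longrightarrow> - u \<in> L"
    and v': "int_lattice_basis n {w \<in> L. w n = 0} v'"
    and u: "u \<in> L" "u n > 0" and dvd: "\<And>w. w \<in> L \<Longrightarrow> u n dvd w n"
  shows "int_lattice_basis (Suc n) L (v'(n := u))"
  unfolding int_lattice_basis_def
proof (intro conjI allI impI ballI)
  show "(v'(n := u)) i \<in> L" if "i < Suc n" for i
    using that v' u by (auto simp: int_lattice_basis_def less_Suc_eq)
next
  fix w assume w: "w \<in> L"
  define q where "q = w n div u n"
  have "w n = q * u n" unfolding q_def using dvd[OF w] by simp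
  then have "(w + (\<lambda>j. - q * u j)) n = 0" by simp
  then have "w + (\<lambda>j. - q * u j) \<in> {w \<in> L. w n = 0}"
    using add[OF w int_lattice_scale_closed[OF zero add neg u(1)]] by blast
  then obtain a where a: "w + (\<lambda>j. - q * u j) = int_lincomb n a v'"
    using v' by (auto simp: int_lattice_basis_def)
  have "int_lincomb (Suc n) (a(n := q)) (v'(n := u)) = w + (\<lambda>j. - q * u j) + (\<lambda>j. q * u j)"
    by (simp add: int_lincomb_Suc flip: a)
  also have "\<dots> = w" by (simp add: fun_eq_iff)
  finally show "\<exists>a. w = int_lincomb (Suc n) a (v'(n := u))" by metis
next
  fix a b i
  assume eq: "int_lincomb (Suc n) a (v'(n := u)) = int_lincomb (Suc n) b (v'(n := u))"
    and "i < Suc n"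
  have v'n: "int_lincomb n c v' n = 0" for c
    using v' by (simp add: int_lattice_basis_def int_lincomb_def)
  from fun_cong[OF eq, of n] have "a n = b n"
    using u(2) v'n by (simp add: int_lincomb_Suc)
  with eq have "int_lincomb n a v' = int_lincomb n b v'"
    by (simp add: int_lincomb_Suc)
  then show "a i = b i"
    using v' \<open>a n = b n\<close> \<open>i < Suc n\<close> by (auto simp: int_lattice_basis_def less_Suc_eq)
qed

lemma full_rank_int_lattice_has_basis:
  fixes L :: "(nat \<Rightarrow> int) set"
  assumes "0 \<in> L" "\<And>u w. u \<in> L \<Longrightarrow> w \<in> L \<Longrightarrow> u + w \<in> L" "\<And>u. u \<in> L \<Longrightarrow> - u \<in> L"
    and "\<And>u i. u \<in> L \<Longrightarrow> n \<le> i \<Longrightarrow> u i = 0"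
    and "\<And>i. i < n \<Longrightarrow> \<exists>N. N \<noteq> 0 \<and> (\<lambda>j. if j = i then N else 0) \<in> L"
  shows "\<exists>v. int_lattice_basis n L v"
  using assms
proof (induction n arbitrary: L)
  case 0
  then have "w = int_lincomb 0 a v" if "w \<in> L" for w a v
    using that by (auto simp: int_lincomb_def)
  then show ?case by (auto simp: int_lattice_basis_def)
next
  case (Suc n)
  note zero = Suc.prems(1) and add = Suc.prems(2) and neg = Suc.prems(3)
  have "\<exists>v'. int_lattice_basis n {w \<in> L. w n = 0} v'"
  proof (rule Suc.IH)
    show "0 \<in> {w \<in> L. w n = 0}" using zero by (simp add: zero_fun_def)
    show "u + w \<in> {w \<in> L. w n = 0}" if "u \<in> {w \<in> L. w n = 0}" "w \<in> {w \<in> L. w n = 0}" for u w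
      using that add by (simp add: plus_fun_def)
    show "- u \<in> {w \<in> L. w n = 0}" if "u \<in> {w \<in> L. w n = 0}" for u
      using that neg by (simp add: fun_Compl_def)
    show "u i = 0" if "u \<in> {w \<in> L. w n = 0}" "n \<le> i" for u i
      using that Suc.prems(4)[of u i] by (cases "i = n") auto
    show "\<And>i. i < n \<Longrightarrow> \<exists>N. N \<noteq> 0 \<and> (\<lambda>j. if j = i then N else 0) \<in> {w \<in> L. w n = 0}"
      using Suc.prems(5) by auto
  qed
  then obtain v' where v': "int_lattice_basis n {w \<in> L. w n = 0} v'" ..
  obtain N where N: "N \<noteq> 0" "(\<lambda>j. if j = n then N else 0) \<in> L" using Suc.prems(5) by blast
  have "(\<lambda>j. if j = n then N else 0) n \<noteq> 0" using N(1) by simp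
  with N(2) obtain u where "u \<in> L" "u n > 0" "\<And>w. w \<in> L \<Longrightarrow> u n dvd w n"
    using int_lattice_coordinate_generator[OF zero add neg] by blast
  then show ?case using int_lattice_basis_extend[OF zero add neg v'] by blast
qed

section \<open>Coordinates with respect to a free abelian basis\<close>

definition basis_coords :: "('a, 'b) monoid_scheme \<Rightarrow> (nat \<Rightarrow> 'a) \<Rightarrow> nat \<Rightarrow> 'a \<Rightarrow> nat \<Rightarrow> int" where
  "basis_coords H b n y = (THE k. (\<forall>i\<ge>n. k i = 0) \<and> y = finprod H (\<lambda>i. b i [^]\<^bsub>H\<^esub> k i) {..<n})"

context
  fixes H (structure) and b :: "nat \<Rightarrow> 'a" and n :: nat
  assumes basis: "free_abelian_basis H b n"
begin

interpretation comm_group H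
  using basis by (simp add: free_abelian_basis_def)

lemma basis_in_carrier: "i < n \<Longrightarrow> b i \<in> carrier H"
  using basis by (simp add: free_abelian_basis_def)

lemma unique_basis_expansion:
  assumes "y \<in> carrier H"
  shows "\<exists>!k :: nat \<Rightarrow> int. (\<forall>i\<ge>n. k i = 0) \<and> y = (\<Otimes>i\<in>{..<n}. b i [^] k i)"
proof -
  have "\<forall>y\<in>carrier H. \<exists>!k :: nat \<Rightarrow> int. (\<forall>i\<ge>n. k i = 0) \<and> y = (\<Otimes>i\<in>{..<n}. b i [^] k i)"
    using basis by (simp add: free_abelian_basis_def)
  then show ?thesis using assms by (rule bspec)
qed

lemma basis_coords_spec:
  assumes "y \<in> carrier H"
  shows "(\<forall>i\<ge>n. basis_coords H b n y i = 0) \<and> y = (\<Otimes>i\<in>{..<n}. b i [^] basis_coords H b n y i)"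
  unfolding basis_coords_def using unique_basis_expansion[OF assms] by (rule theI')

lemma basis_coords_eqI:
  fixes k :: "nat \<Rightarrow> int"
  assumes "y \<in> carrier H" "\<forall>i\<ge>n. k i = 0" "y = (\<Otimes>i\<in>{..<n}. b i [^] k i)"
  shows "basis_coords H b n y = k"
  unfolding basis_coords_def using unique_basis_expansion[OF assms(1)]
  by (rule the1_equality) (use assms(2,3) in blast)

lemma basis_coords_out_of_range: "y \<in> carrier H \<Longrightarrow> n \<le> i \<Longrightarrow> basis_coords H b n y i = 0"
  using basis_coords_spec by blast

lemma basis_coords_mult:
  assumes "y \<in> carrier H" "y' \<in> carrier H"
  shows "basis_coords H b n (y \<otimes> y') = basis_coords H b n y + basis_coords H b n y'"
proof (rule basis_coords_eqI)
  let ?k = "basis_coords H b n y" and ?k' = "basis_coords H b n y'"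
  have "y \<otimes> y' = (\<Otimes>i\<in>{..<n}. b i [^] ?k i) \<otimes> (\<Otimes>i\<in>{..<n}. b i [^] ?k' i)"
    using basis_coords_spec assms by simp
  also have "\<dots> = (\<Otimes>i\<in>{..<n}. b i [^] ?k i \<otimes> b i [^] ?k' i)"
    using basis_in_carrier by (intro finprod_multf[symmetric]) auto
  also have "\<dots> = (\<Otimes>i\<in>{..<n}. b i [^] (?k + ?k') i)"
    using basis_in_carrier by (intro finprod_cong') (auto simp: int_pow_mult)
  finally show "y \<otimes> y' = (\<Otimes>i\<in>{..<n}. b i [^] (?k + ?k') i)" .
  show "y \<otimes> y' \<in> carrier H" using assms by simp
  show "\<forall>i\<ge>n. (?k + ?k') i = 0" using assms by (simp add: basis_coords_out_of_range)
qed

lemma basis_coords_one: "basis_coords H b n \<one> = 0"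
  by (rule basis_coords_eqI) auto

lemma basis_coords_eq_0_iff:
  assumes "y \<in> carrier H"
  shows "basis_coords H b n y = 0 \<longleftrightarrow> y = \<one>"
  using basis_coords_spec[OF assms] basis_coords_one by auto

lemma basis_coords_surj:
  fixes k :: "nat \<Rightarrow> int"
  assumes "\<forall>i\<ge>n. k i = 0"
  shows "\<exists>y\<in>carrier H. basis_coords H b n y = k"
proof
  show "(\<Otimes>i\<in>{..<n}. b i [^] k i) \<in> carrier H"
    using basis_in_carrier by (intro finprod_closed) simp
  then show "basis_coords H b n (\<Otimes>i\<in>{..<n}. b i [^] k i) = k"
    using assms by (rule basis_coords_eqI) simp
qed

end

context normal
begin

lemma coset_basis_coords_mult:
  assumes "free_abelian_basis (G Mod H) b n" "g \<in> carrier G" "h \<in> carrier G"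
  shows "basis_coords (G Mod H) b n (H #> (g \<otimes> h))
       = basis_coords (G Mod H) b n (H #> g) + basis_coords (G Mod H) b n (H #> h)"
  using basis_coords_mult[OF assms(1), of "H #> g" "H #> h"] assms(2,3)
  by (simp add: carrier_FactGroup rcos_sum)

lemma coset_basis_coords_eq_0_iff:
  assumes "free_abelian_basis (G Mod H) b n" "g \<in> carrier G"
  shows "basis_coords (G Mod H) b n (H #> g) = 0 \<longleftrightarrow> g \<in> H"
proof -
  have "H #> g \<in> carrier (G Mod H)" using assms(2) by (simp add: carrier_FactGroup)
  then have "basis_coords (G Mod H) b n (H #> g) = 0 \<longleftrightarrow> H #> g = H"
    using basis_coords_eq_0_iff[OF assms(1)] by simp
  also have "\<dots> \<longleftrightarrow> g \<in> H"
    using assms(2) coset_join1[OF _ _ is_subgroup] coset_join2[OF _ is_subgroup] by blast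
  finally show ?thesis .
qed

lemma coset_basis_coords_surj:
  assumes "free_abelian_basis (G Mod H) b n" "\<forall>i\<ge>n. k i = 0"
  shows "\<exists>g\<in>carrier G. basis_coords (G Mod H) b n (H #> g) = k"
  using basis_coords_surj[OF assms] by (auto simp: carrier_FactGroup)

end

section \<open>Generators of kernels of additive maps to the integers\<close>

context group
begin

lemma additive_group_hom:
  assumes "subgroup B G" and "\<And>a b. a \<in> B \<Longrightarrow> b \<in> B \<Longrightarrow> \<phi> (a \<otimes> b) = \<phi> a + (\<phi> b :: int)"
  shows "group_hom (G\<lparr>carrier := B\<rparr>) integer_group \<phi>"
  unfolding group_hom_def group_hom_axioms_def
  using assms by (auto intro: subgroup_imp_group homI)

lemma additive_int_pow:
  assumes "subgroup B G" and "\<And>a b. a \<in> B \<Longrightarrow> b \<in> B \<Longrightarrow> \<phi> (a \<otimes> b) = \<phi> a + (\<phi> b :: int)"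
    and "b \<in> B"
  shows "\<phi> (b [^] (k::int)) = k * \<phi> b"
  using group_hom.hom_int_pow[OF additive_group_hom[OF assms(1,2)], of b k] assms(3)
  by (simp add: int_pow_consistent[OF assms(1,3)])

lemma additive_vector_int_pow:
  fixes \<kappa> :: "'a \<Rightarrow> nat \<Rightarrow> int"
  assumes "\<And>a b. a \<in> carrier G \<Longrightarrow> b \<in> carrier G \<Longrightarrow> \<kappa> (a \<otimes> b) = \<kappa> a + \<kappa> b"
    and "g \<in> carrier G"
  shows "\<kappa> (g [^] (k::int)) = (\<lambda>j. k * \<kappa> g j)"
  using additive_int_pow[OF subgroup_self, of "\<lambda>g. \<kappa> g _"] assms by (simp add: fun_eq_iff)

lemma additive_kernel_subgroup:
  fixes \<phi> :: "'a \<Rightarrow> 'c :: ab_group_add"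
  assumes B: "subgroup B G" and add: "\<And>a b. a \<in> B \<Longrightarrow> b \<in> B \<Longrightarrow> \<phi> (a \<otimes> b) = \<phi> a + \<phi> b"
  shows "subgroup {b \<in> B. \<phi> b = 0} G"
proof (rule subgroupI)
  have one: "\<phi> \<one> = 0" using add[of \<one> \<one>] subgroup.one_closed[OF B] by simp
  then show "{b \<in> B. \<phi> b = 0} \<noteq> {}" using subgroup.one_closed[OF B] by blast
  show "inv a \<in> {b \<in> B. \<phi> b = 0}" if "a \<in> {b \<in> B. \<phi> b = 0}" for a
    using that add[of "inv a" a] one subgroup.m_inv_closed[OF B] subgroup.mem_carrier[OF B] by auto
qed (use B add subgroup.subset[OF B] subgroup.m_closed[OF B] in auto)

lemma generate_insert_mult_int_pow:
  assumes "T \<subseteq> carrier G" "s \<in> carrier G" "t \<in> T"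
  shows "generate G (insert (s \<otimes> t [^] (k::int)) T) = generate G (insert s T)"
proof -
  have closed: "u \<otimes> t [^] (l::int) \<in> generate G (insert u T)" if "u \<in> carrier G" for u l
  proof -
    have sub: "subgroup (generate G (insert u T)) G"
      using assms(1) that by (intro generate_is_subgroup) auto
    have "t [^] l \<in> generate G (insert u T)"
      using subgroup_int_pow_closed[OF sub generate.incl[of t]] assms(3) by blast
    then show ?thesis using sub generate.incl[of u "insert u T" G] by (simp add: subgroup.m_closed)
  qed
  have tc: "t \<in> carrier G" using assms by blast
  have s: "s = (s \<otimes> t [^] k) \<otimes> t [^] (- k)"
    using assms(2) tc by (simp add: m_assoc flip: int_pow_mult)
  show ?thesis
  proof (intro equalityI generate_subgroup_incl generate_is_subgroup)
    show "insert (s \<otimes> t [^] k) T \<subseteq> generate G (insert s T)"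
      using closed[OF assms(2)] generate.incl[of _ "insert s T"] by blast
    show "insert s T \<subseteq> generate G (insert (s \<otimes> t [^] k) T)"
      using closed[of "s \<otimes> t [^] k" "- k"] assms(2) tc s generate.incl[of _ "insert (s \<otimes> t [^] k) T"]
      by auto
  qed (use assms tc in auto)
qed

text \<open>A step of Euclid's algorithm on the values of \<open>\<phi>\<close>: replacing the generator \<open>s\<close> by
  \<open>s \<otimes> t [^] - (\<phi> s div \<phi> t)\<close> turns \<open>\<phi> s\<close> into \<open>\<phi> s mod \<phi> t\<close>.\<close>

lemma additive_euclid_step:
  assumes B: "subgroup B G" and add: "\<And>a b. a \<in> B \<Longrightarrow> b \<in> B \<Longrightarrow> \<phi> (a \<otimes> b) = \<phi> a + (\<phi> b :: int)"
    and S: "finite S" "S \<subseteq> B"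
    and st: "s \<in> S" "t \<in> S" "s \<noteq> t" "\<phi> t \<noteq> 0" "\<bar>\<phi> t\<bar> \<le> \<bar>\<phi> s\<bar>"
  obtains S' where "finite S'" "S' \<subseteq> B" "card S' \<le> card S" "generate G S' = generate G S"
    "(\<Sum>y\<in>S'. nat \<bar>\<phi> y\<bar>) < (\<Sum>y\<in>S. nat \<bar>\<phi> y\<bar>)"
proof
  have sB: "s \<in> B" and tB: "t \<in> B" using st S by auto
  define s' where "s' = s \<otimes> t [^] (- (\<phi> s div \<phi> t))"
  have "\<phi> s' = \<phi> s + - (\<phi> s div \<phi> t) * \<phi> t"
    unfolding s'_def using add[OF sB subgroup_int_pow_closed[OF B tB]] additive_int_pow[OF B add tB]
    by simp
  then have "\<phi> s' = \<phi> s mod \<phi> t" by (simp add: minus_div_mult_eq_mod[symmetric])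
  then have decrease: "nat \<bar>\<phi> s'\<bar> < nat \<bar>\<phi> s\<bar>"
    using abs_mod_less[OF st(4), of "\<phi> s"] st(5) by simp
  show "finite (insert s' (S - {s}))" using S(1) by simp
  show "insert s' (S - {s}) \<subseteq> B"
    unfolding s'_def using S(2) sB subgroup_int_pow_closed[OF B tB]
    by (auto intro: subgroup.m_closed[OF B])
  show "card (insert s' (S - {s})) \<le> card S"
    using card_insert_le_m1[of "card S" "S - {s}" s'] card_Suc_Diff1[OF S(1) st(1)] by simp
  have "generate G (insert s' (S - {s})) = generate G (insert s (S - {s}))"
    unfolding s'_def using st S(2) subgroup.subset[OF B]
    by (intro generate_insert_mult_int_pow) auto
  also have "insert s (S - {s}) = S" using st(1) by blast
  finally show "generate G (insert s' (S - {s})) = generate G S" .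
  have "(\<Sum>y\<in>insert s' (S - {s}). nat \<bar>\<phi> y\<bar>) \<le> nat \<bar>\<phi> s'\<bar> + (\<Sum>y\<in>S - {s}. nat \<bar>\<phi> y\<bar>)"
    using S(1) by (simp add: sum.insert_if)
  also have "\<dots> < nat \<bar>\<phi> s\<bar> + (\<Sum>y\<in>S - {s}. nat \<bar>\<phi> y\<bar>)"
    using decrease by simp
  also have "\<dots> = (\<Sum>y\<in>S. nat \<bar>\<phi> y\<bar>)"
    by (rule sum.remove[OF S(1) st(1), symmetric])
  finally show "(\<Sum>y\<in>insert s' (S - {s}). nat \<bar>\<phi> y\<bar>) < (\<Sum>y\<in>S. nat \<bar>\<phi> y\<bar>)" .
qed

end

context comm_group
begin

lemma generate_insert_subset_set_mult:
  assumes "T \<subseteq> carrier G" "s \<in> carrier G"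
  shows "generate G (insert s T) \<subseteq> generate G {s} <#> generate G T"
proof (rule generate_subgroup_incl)
  show "subgroup (generate G {s} <#> generate G T) G"
    using assms by (intro mult_subgroups generate_is_subgroup) auto
  have "s = s \<otimes> \<one>" "\<And>t. t \<in> T \<Longrightarrow> t = \<one> \<otimes> t" using assms by auto
  then show "insert s T \<subseteq> generate G {s} <#> generate G T"
    unfolding set_mult_def by (blast intro: generate.incl generate.one)
qed

lemma additive_kernel_generated_by_rest:
  assumes B: "subgroup B G" and add: "\<And>a b. a \<in> B \<Longrightarrow> b \<in> B \<Longrightarrow> \<phi> (a \<otimes> b) = \<phi> a + (\<phi> b :: int)"
    and gen: "generate G (insert s T) = B" and "s \<in> B" "\<phi> s \<noteq> 0" "T \<subseteq> B" "\<forall>t\<in>T. \<phi> t = 0"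
  shows "generate G T = {b \<in> B. \<phi> b = 0}"
proof
  show "generate G T \<subseteq> {b \<in> B. \<phi> b = 0}"
    using assms by (intro generate_subgroup_incl additive_kernel_subgroup) auto
  show "{b \<in> B. \<phi> b = 0} \<subseteq> generate G T"
  proof safe
    fix b assume "b \<in> B" "\<phi> b = 0"
    have BG: "B \<subseteq> carrier G" using B subgroup.subset by blast
    then have "b \<in> generate G {s} <#> generate G T"
      using generate_insert_subset_set_mult[of T s] gen \<open>b \<in> B\<close> assms(4,6) by blast
    then obtain h t where "h \<in> generate G {s}" and t: "t \<in> generate G T" and "b = h \<otimes> t"
      unfolding set_mult_def by blast
    moreover have "generate G {s} = {s [^] (k::int) | k. k \<in> UNIV}"
      using assms(4) BG by (intro generate_pow) blast
    ultimately obtain k where b: "b = s [^] (k::int) \<otimes> t" by auto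
    have "t \<in> B" "\<phi> t = 0" using t \<open>generate G T \<subseteq> {b \<in> B. \<phi> b = 0}\<close> by auto
    then have "\<phi> b = k * \<phi> s"
      using add[OF subgroup_int_pow_closed[OF B \<open>s \<in> B\<close>]] additive_int_pow[OF B add \<open>s \<in> B\<close>] b
      by simp
    then have "k = 0" using \<open>\<phi> b = 0\<close> \<open>\<phi> s \<noteq> 0\<close> by simp
    then show "b \<in> generate G T" using b t \<open>t \<in> B\<close> BG by auto
  qed
qed

lemma additive_kernel_generated_by_fewer:
  assumes B: "subgroup B G" and add: "\<And>a b. a \<in> B \<Longrightarrow> b \<in> B \<Longrightarrow> \<phi> (a \<otimes> b) = \<phi> a + (\<phi> b :: int)"
    and nz: "\<exists>b\<in>B. \<phi> b \<noteq> 0" and "finite S" "S \<subseteq> B" "generate G S = B"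
  shows "\<exists>S'. finite S' \<and> card S' < card S \<and> generate G S' = {b \<in> B. \<phi> b = 0}"
  using assms(4-6)
proof (induction "\<Sum>s\<in>S. nat \<bar>\<phi> s\<bar>" arbitrary: S rule: less_induct)
  case less
  show ?case
  proof (cases "\<exists>s\<in>S. \<exists>t\<in>S. s \<noteq> t \<and> \<phi> s \<noteq> 0 \<and> \<phi> t \<noteq> 0")
    case True
    then obtain s t where "s \<in> S" "t \<in> S" "s \<noteq> t" "\<phi> t \<noteq> 0" "\<bar>\<phi> t\<bar> \<le> \<bar>\<phi> s\<bar>"
      by (metis linorder_le_cases)
    then obtain S' where S': "finite S'" "S' \<subseteq> B" "card S' \<le> card S" "generate G S' = generate G S"
      and "(\<Sum>y\<in>S'. nat \<bar>\<phi> y\<bar>) < (\<Sum>y\<in>S. nat \<bar>\<phi> y\<bar>)"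
      using additive_euclid_step[OF B add less.prems(1,2)] by blast
    then obtain S'' where "finite S''" "card S'' < card S'" "generate G S'' = {b \<in> B. \<phi> b = 0}"
      using less.hyps[of S'] less.prems(3) by blast
    then show ?thesis using S'(3) by (intro exI[of _ S'']) simp
  next
    case False
    have "\<exists>s\<in>S. \<phi> s \<noteq> 0"
    proof (rule ccontr)
      assume "\<not> (\<exists>s\<in>S. \<phi> s \<noteq> 0)"
      then have "generate G S \<subseteq> {b \<in> B. \<phi> b = 0}"
        using less.prems(2) by (intro generate_subgroup_incl additive_kernel_subgroup[OF B add]) auto
      then show False using nz less.prems(3) by auto
    qed
    then obtain s where s: "s \<in> S" "\<phi> s \<noteq> 0" ..
    have "generate G (S - {s}) = {b \<in> B. \<phi> b = 0}"
      using False s less.prems(2,3)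
      by (intro additive_kernel_generated_by_rest[OF B add, of s]) (auto simp: insert_absorb)
    moreover have "card (S - {s}) < card S" by (rule card_Diff1_less[OF less.prems(1) s(1)])
    ultimately show ?thesis using less.prems(1) by blast
  qed
qed

lemma additive_vector_kernel_generated_by_fewer:
  fixes \<kappa> :: "'a \<Rightarrow> nat \<Rightarrow> int"
  assumes "subgroup B G" and "\<And>a b. a \<in> B \<Longrightarrow> b \<in> B \<Longrightarrow> \<kappa> (a \<otimes> b) = \<kappa> a + \<kappa> b"
    and "\<And>b i. b \<in> B \<Longrightarrow> n \<le> i \<Longrightarrow> \<kappa> b i = 0"
    and "\<And>i. i < n \<Longrightarrow> \<exists>N. N \<noteq> 0 \<and> (\<lambda>j. if j = i then N else 0) \<in> \<kappa> ` B"
    and "finite S" "S \<subseteq> B" "generate G S = B"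
  shows "\<exists>S'. finite S' \<and> card S' + n \<le> card S \<and> generate G S' = {b \<in> B. \<kappa> b = 0}"
  using assms
proof (induction n arbitrary: B S)
  case 0
  have "\<kappa> b = 0" if "b \<in> B" for b using 0(3)[OF that] by (simp add: fun_eq_iff)
  then have "generate G S = {b \<in> B. \<kappa> b = 0}" using 0(7) by blast
  with 0(5) show ?case by (intro exI[of _ S]) (simp add: zero_fun_def)
next
  case (Suc n)
  note B = Suc.prems(1) and add = Suc.prems(2)
  define B' where "B' = {b \<in> B. \<kappa> b n = 0}"
  have add_n: "\<kappa> (a \<otimes> b) n = \<kappa> a n + \<kappa> b n" if "a \<in> B" "b \<in> B" for a b
    using add[OF that] by simp
  obtain N b where "N \<noteq> 0" "b \<in> B" "\<kappa> b = (\<lambda>j. if j = n then N else 0)"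
    using Suc.prems(4)[of n] by (auto simp: image_iff)
  then have "\<exists>b\<in>B. \<kappa> b n \<noteq> 0" by (intro bexI[of _ b]) simp_all
  then obtain S1 where S1: "finite S1" "card S1 < card S" "generate G S1 = B'"
    using additive_kernel_generated_by_fewer[OF B add_n _ Suc.prems(5-7)] unfolding B'_def by blast
  have B': "subgroup B' G"
    unfolding B'_def by (rule additive_kernel_subgroup[OF B add_n])
  have "\<exists>S'. finite S' \<and> card S' + n \<le> card S1 \<and> generate G S' = {b \<in> B'. \<kappa> b = 0}"
  proof (rule Suc.IH[OF B' _ _ _ S1(1) _ S1(3)])
    show "\<kappa> (a \<otimes> b) = \<kappa> a + \<kappa> b" if "a \<in> B'" "b \<in> B'" for a b
      using that add by (simp add: B'_def plus_fun_def)
    show "\<kappa> b i = 0" if "b \<in> B'" "n \<le> i" for b i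
      using that Suc.prems(3)[of b i] by (cases "i = n") (auto simp: B'_def)
    show "\<exists>N. N \<noteq> 0 \<and> (\<lambda>j. if j = i then N else 0) \<in> \<kappa> ` B'" if "i < n" for i
    proof -
      obtain N b where "N \<noteq> 0" "b \<in> B" "\<kappa> b = (\<lambda>j. if j = i then N else 0)"
        using Suc.prems(4)[of i] \<open>i < n\<close> by (auto simp: image_iff)
      moreover have "b \<in> B'" using calculation \<open>i < n\<close> by (simp add: B'_def)
      ultimately show ?thesis by (metis image_eqI)
    qed
    show "S1 \<subseteq> B'" using S1(3) generate.incl[of _ S1 G] by blast
  qed
  then obtain S' where "finite S'" "card S' + n \<le> card S1" "generate G S' = {b \<in> B'. \<kappa> b = 0}"
    by blast
  moreover have "{b \<in> B'. \<kappa> b = 0} = {b \<in> B. \<kappa> b = 0}" by (auto simp: B'_def)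
  ultimately show ?case using S1(2) by (intro exI[of _ S']) (simp add: zero_fun_def)
qed

end

section \<open>Centralizers and finite commutator subgroups\<close>

definition centralizer :: "('a, 'b) monoid_scheme \<Rightarrow> 'a set \<Rightarrow> 'a set" where
  "centralizer G H = {g \<in> carrier G. \<forall>h\<in>H. g \<otimes>\<^bsub>G\<^esub> h = h \<otimes>\<^bsub>G\<^esub> g}"

lemma group_center_eq_centralizer: "group_center G = centralizer G (carrier G)"
  by (simp add: group_center_def centralizer_def)

lemma centralizer_insert: "centralizer G (insert y Y) = centralizer G {y} \<inter> centralizer G Y"
  by (auto simp: centralizer_def)

context group
begin

lemma subgroup_centralizer:
  assumes "H \<subseteq> carrier G"
  shows "subgroup (centralizer G H) G"
proof (rule subgroupI)
  show "inv g \<in> centralizer G H" if "g \<in> centralizer G H" for g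
  proof -
    have "inv g \<otimes> h = h \<otimes> inv g" if "g \<in> carrier G" "h \<in> H" "g \<otimes> h = h \<otimes> g" for h
    proof -
      have hc: "h \<in> carrier G" using that(2) assms by blast
      have "inv g \<otimes> h = inv g \<otimes> (h \<otimes> g) \<otimes> inv g" using that(1) hc by (simp add: m_assoc)
      also have "\<dots> = inv g \<otimes> (g \<otimes> h) \<otimes> inv g" using that(3) by simp
      also have "\<dots> = h \<otimes> inv g" using that(1) hc by (simp add: m_assoc[symmetric])
      finally show ?thesis .
    qed
    then show ?thesis using \<open>g \<in> centralizer G H\<close> by (simp add: centralizer_def)
  qed
  show "g \<otimes> g' \<in> centralizer G H" if "g \<in> centralizer G H" "g' \<in> centralizer G H" for g g'
  proof -
    have "g \<otimes> g' \<otimes> h = h \<otimes> (g \<otimes> g')" if "h \<in> H" for h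
    proof -
      have c: "g \<in> carrier G" "g' \<in> carrier G" "h \<in> carrier G"
        using \<open>g \<in> centralizer G H\<close> \<open>g' \<in> centralizer G H\<close> that assms
        by (auto simp: centralizer_def)
      have "g \<otimes> g' \<otimes> h = g \<otimes> (h \<otimes> g')"
        using c \<open>g' \<in> centralizer G H\<close> that by (simp add: m_assoc centralizer_def)
      also have "\<dots> = h \<otimes> (g \<otimes> g')"
        using c \<open>g \<in> centralizer G H\<close> that by (simp add: m_assoc[symmetric] centralizer_def)
      finally show ?thesis .
    qed
    then show ?thesis using that by (simp add: centralizer_def)
  qed
  show "centralizer G H \<subseteq> carrier G" by (simp add: centralizer_def)
  have "\<one> \<in> centralizer G H" using assms by (auto simp: centralizer_def)
  then show "centralizer G H \<noteq> {}" by blast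
qed

lemma subgroup_center: "subgroup (group_center G) G"
  unfolding group_center_eq_centralizer by (rule subgroup_centralizer) simp

lemma comm_group_center: "comm_group (G\<lparr>carrier := group_center G\<rparr>)"
proof (rule group.group_comm_groupI[OF subgroup_imp_group[OF subgroup_center]])
  fix a b assume "a \<in> carrier (G\<lparr>carrier := group_center G\<rparr>)" "b \<in> carrier (G\<lparr>carrier := group_center G\<rparr>)"
  then have "a \<in> group_center G" "b \<in> group_center G" by simp_all
  then have "a \<otimes> b = b \<otimes> a" unfolding group_center_def by blast
  then show "a \<otimes>\<^bsub>G\<lparr>carrier := group_center G\<rparr>\<^esub> b = b \<otimes>\<^bsub>G\<lparr>carrier := group_center G\<rparr>\<^esub> a"
    by simp
qed

lemma centralizer_generate:
  assumes "S \<subseteq> carrier G"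
  shows "centralizer G (generate G S) = centralizer G S"
proof
  show "centralizer G (generate G S) \<subseteq> centralizer G S"
    using generate.incl[of _ S G] by (auto simp: centralizer_def)
  show "centralizer G S \<subseteq> centralizer G (generate G S)"
  proof
    fix g assume g: "g \<in> centralizer G S"
    then have "S \<subseteq> centralizer G {g}" using assms by (auto simp: centralizer_def)
    then have "generate G S \<subseteq> centralizer G {g}"
      using g by (intro generate_subgroup_incl subgroup_centralizer) (auto simp: centralizer_def)
    then show "g \<in> centralizer G (generate G S)" using g by (auto simp: centralizer_def)
  qed
qed

lemma conj_eq_imp_commute:
  assumes "u \<in> carrier G" "v \<in> carrier G" "y \<in> carrier G" "inv u \<otimes> y \<otimes> u = inv v \<otimes> y \<otimes> v"
  shows "u \<otimes> inv v \<otimes> y = y \<otimes> (u \<otimes> inv v)"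
proof -
  have "y \<otimes> (u \<otimes> inv v) = u \<otimes> (inv u \<otimes> y \<otimes> u) \<otimes> inv v"
    using assms(1-3) by (simp add: m_assoc[symmetric])
  also have "\<dots> = u \<otimes> (inv v \<otimes> y \<otimes> v) \<otimes> inv v" using assms(4) by simp
  also have "\<dots> = u \<otimes> inv v \<otimes> y" using assms(1-3) by (simp add: m_assoc)
  finally show ?thesis by (rule sym)
qed

lemma finite_derived_power_commutes:
  assumes "finite (derived G (carrier G))" "g \<in> carrier G" "y \<in> carrier G"
  shows "\<exists>k::int. k \<noteq> 0 \<and> g [^] k \<in> centralizer G {y}"
proof -
  define C where "C = derived G (carrier G)"
  define f where "f m = inv (g [^] (m::int)) \<otimes> y \<otimes> g [^] m" for m
  have "f m \<in> C #> y" for m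
  proof -
    have gm: "inv (g [^] m) \<in> carrier G" using assms(2) by simp
    have "inv (g [^] m) \<otimes> y \<otimes> inv (inv (g [^] m)) \<otimes> inv y \<in> derived_set G (carrier G)"
      by (rule UN_I[OF gm], rule UN_I[OF assms(3)]) simp
    then have "inv (g [^] m) \<otimes> y \<otimes> g [^] m \<otimes> inv y \<in> C"
      unfolding C_def derived_def using assms(2) by (simp add: generate.incl)
    moreover have "f m = inv (g [^] m) \<otimes> y \<otimes> g [^] m \<otimes> inv y \<otimes> y"
      unfolding f_def using assms(2,3) by (simp add: m_assoc)
    moreover have "C \<subseteq> carrier G" unfolding C_def by (rule derived_in_carrier) simp
    ultimately show ?thesis using assms(3) by (simp add: rcosI)
  qed
  then have "range f \<subseteq> C #> y" by blast
  moreover have "finite (C #> y)" using assms(1) by (simp add: C_def r_coset_def)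
  ultimately have "finite (range f)" by (rule finite_subset)
  then have "\<not> inj f" using finite_imageD infinite_UNIV_int by blast
  then obtain m1 m2 where "m1 \<noteq> m2" "f m1 = f m2" unfolding inj_def by blast
  then have "g [^] m1 \<otimes> inv (g [^] m2) \<otimes> y = y \<otimes> (g [^] m1 \<otimes> inv (g [^] m2))"
    unfolding f_def using assms(2,3) by (intro conj_eq_imp_commute) simp_all
  then have "g [^] (m1 - m2) \<in> centralizer G {y}"
    using assms(2,3) by (simp add: centralizer_def int_pow_diff)
  then show ?thesis using \<open>m1 \<noteq> m2\<close> by (intro exI[of _ "m1 - m2"]) simp
qed

lemma finite_derived_power_centralizes:
  assumes "finite (derived G (carrier G))" "g \<in> carrier G" "finite Y" "Y \<subseteq> carrier G"
  shows "\<exists>k::int. k \<noteq> 0 \<and> g [^] k \<in> centralizer G Y"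
  using assms(3,4)
proof (induction Y rule: finite_induct)
  case empty
  show ?case using assms(2) by (intro exI[of _ 1]) (simp add: centralizer_def)
next
  case (insert y Y)
  have Y: "Y \<subseteq> carrier G" and y: "y \<in> carrier G" using insert.prems by simp_all
  obtain k1 :: int where k1: "k1 \<noteq> 0" "g [^] k1 \<in> centralizer G Y"
    using insert.IH[OF Y] by blast
  obtain k2 :: int where k2: "k2 \<noteq> 0" "g [^] k2 \<in> centralizer G {y}"
    using finite_derived_power_commutes[OF assms(1,2) y] by blast
  have "g [^] (k1 * k2) \<in> centralizer G Y"
    using subgroup_int_pow_closed[OF subgroup_centralizer[OF Y] k1(2), of k2]
    by (simp add: int_pow_pow[OF assms(2)])
  moreover have "g [^] (k2 * k1) \<in> centralizer G {y}"
    using subgroup_int_pow_closed[OF subgroup_centralizer k2(2), of k1] y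
    by (simp add: int_pow_pow[OF assms(2)])
  ultimately have "g [^] (k1 * k2) \<in> centralizer G (insert y Y)"
    using centralizer_insert[of G y Y] by (simp add: mult.commute)
  then show ?case using k1(1) k2(1) by (intro exI[of _ "k1 * k2"]) simp
qed

lemma finite_derived_power_central:
  assumes "finite (derived G (carrier G))" "finite gens" "gens \<subseteq> carrier G" "generate G gens = carrier G"
    and "g \<in> carrier G"
  shows "\<exists>k::int. k \<noteq> 0 \<and> g [^] k \<in> group_center G"
  using finite_derived_power_centralizes[OF assms(1,5,2,3)] centralizer_generate[OF assms(3)] assms(4)
  by (simp add: group_center_eq_centralizer)

end

section \<open>Free abelian complements and ranks\<close>

primrec power_prod :: "('a, 'b) monoid_scheme \<Rightarrow> (nat \<Rightarrow> 'a) \<Rightarrow> (nat \<Rightarrow> int) \<Rightarrow> nat \<Rightarrow> 'a" where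
  "power_prod G z a 0 = \<one>\<^bsub>G\<^esub>"
| "power_prod G z a (Suc m) = power_prod G z a m \<otimes>\<^bsub>G\<^esub> z m [^]\<^bsub>G\<^esub> a m"

context group
begin

lemma power_prod_in_subgroup:
  assumes "subgroup H G" "\<forall>i<m. z i \<in> H"
  shows "power_prod G z a m \<in> H"
  using assms(2)
  by (induction m) (auto intro: subgroup.one_closed[OF assms(1)] subgroup.m_closed[OF assms(1)]
                           subgroup_int_pow_closed[OF assms(1)])

lemma power_prod_closed: "\<forall>i<m. z i \<in> carrier G \<Longrightarrow> power_prod G z a m \<in> carrier G"
  by (rule power_prod_in_subgroup[OF subgroup_self])

lemma power_prod_cong: "\<forall>i<m. a i = b i \<Longrightarrow> power_prod G z a m = power_prod G z b m"
  by (induction m) auto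

lemma power_prod_zero [simp]: "power_prod G z 0 m = \<one>"
  by (induction m) auto

lemma power_prod_unit:
  assumes "\<forall>i<m. z i \<in> carrier G"
  shows "power_prod G z (\<lambda>j. if j = i then 1 else 0) m = (if i < m then z i else \<one>)"
  using assms by (induction m) (auto simp: power_prod_closed less_Suc_eq)

lemma additive_power_prod:
  fixes \<kappa> :: "'a \<Rightarrow> nat \<Rightarrow> int"
  assumes add: "\<And>a b. a \<in> carrier G \<Longrightarrow> b \<in> carrier G \<Longrightarrow> \<kappa> (a \<otimes> b) = \<kappa> a + \<kappa> b"
    and "\<forall>i<m. z i \<in> carrier G"
  shows "\<kappa> (power_prod G z a m) = int_lincomb m a (\<lambda>i. \<kappa> (z i))"
  using assms(2)
proof (induction m)
  case 0
  have "\<kappa> \<one> = 0" using add[of \<one> \<one>] by simp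
  then show ?case by (simp add: int_lincomb_def zero_fun_def)
next
  case (Suc m)
  show ?case
    using Suc add[OF power_prod_closed] additive_vector_int_pow[OF add] by (simp add: int_lincomb_Suc)
qed

end

context comm_group
begin

lemma power_prod_add:
  assumes "\<forall>i<m. z i \<in> carrier G"
  shows "power_prod G z (a + b) m = power_prod G z a m \<otimes> power_prod G z b m"
  using assms by (induction m) (auto simp: int_pow_mult power_prod_closed m_ac)

lemma power_prod_uminus:
  assumes "\<forall>i<m. z i \<in> carrier G"
  shows "power_prod G z (- a) m = inv (power_prod G z a m)"
  using power_prod_add[OF assms, of "- a" a] assms
  by (intro inv_equality[symmetric]) (simp_all add: power_prod_closed)

lemma range_power_prod:
  assumes "\<forall>i<n. z i \<in> carrier G"
  shows "range (\<lambda>a. power_prod G z a n) = generate G (z ` {..<n})"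
proof
  show "range (\<lambda>a. power_prod G z a n) \<subseteq> generate G (z ` {..<n})"
    using assms generate.incl[of _ "z ` {..<n}" G]
    by (auto intro!: power_prod_in_subgroup generate_is_subgroup)
  show "generate G (z ` {..<n}) \<subseteq> range (\<lambda>a. power_prod G z a n)"
  proof (rule generate_subgroup_incl)
    show "z ` {..<n} \<subseteq> range (\<lambda>a. power_prod G z a n)"
    proof (rule image_subsetI)
      fix i assume "i \<in> {..<n}"
      then have "z i = power_prod G z (\<lambda>j. if j = i then 1 else 0) n"
        using power_prod_unit[OF assms] by simp
      then show "z i \<in> range (\<lambda>a. power_prod G z a n)" by blast
    qed
    show "subgroup (range (\<lambda>a. power_prod G z a n)) G"
    proof (rule subgroupI)
      show "range (\<lambda>a. power_prod G z a n) \<subseteq> carrier G" using power_prod_closed[OF assms] by blast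
    next
      fix g assume "g \<in> range (\<lambda>a. power_prod G z a n)"
      then obtain a where "g = power_prod G z a n" by blast
      then have "inv g = power_prod G z (- a) n" using power_prod_uminus[OF assms] by simp
      then show "inv g \<in> range (\<lambda>a. power_prod G z a n)" by blast
    next
      fix g h assume "g \<in> range (\<lambda>a. power_prod G z a n)" "h \<in> range (\<lambda>a. power_prod G z a n)"
      then obtain a b where "g = power_prod G z a n" "h = power_prod G z b n" by blast
      then have "g \<otimes> h = power_prod G z (a + b) n" using power_prod_add[OF assms] by simp
      then show "g \<otimes> h \<in> range (\<lambda>a. power_prod G z a n)" by blast
    qed blast
  qed
qed

lemma power_prod_lookup_hom:
  assumes "\<forall>i<n. z i \<in> carrier G"
  shows "(\<lambda>p. power_prod G z (poly_mapping.lookup p) n)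
           \<in> hom (free_Abelian_group {..<n}) (G\<lparr>carrier := generate G (z ` {..<n})\<rparr>)"
proof (rule homI)
  show "power_prod G z (poly_mapping.lookup p) n \<in> carrier (G\<lparr>carrier := generate G (z ` {..<n})\<rparr>)" for p
    using range_power_prod[OF assms] by auto
  show "power_prod G z (poly_mapping.lookup (p \<otimes>\<^bsub>free_Abelian_group {..<n}\<^esub> q)) n
      = power_prod G z (poly_mapping.lookup p) n \<otimes>\<^bsub>G\<lparr>carrier := generate G (z ` {..<n})\<rparr>\<^esub>
        power_prod G z (poly_mapping.lookup q) n" for p q
    using power_prod_add[OF assms] by (simp add: plus_poly_mapping.rep_eq plus_fun_def)
qed

lemma independent_power_prod_iso_free_Abelian_group:
  assumes z: "\<forall>i<n. z i \<in> carrier G"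
    and indep: "\<And>a b. power_prod G z a n = power_prod G z b n \<Longrightarrow> \<forall>i<n. a i = b i"
  shows "G\<lparr>carrier := generate G (z ` {..<n})\<rparr> \<cong> free_Abelian_group {..<n}"
proof -
  define F where "F = free_Abelian_group ({..<n} :: nat set)"
  define \<psi> where "\<psi> = (\<lambda>p :: nat \<Rightarrow>\<^sub>0 int. power_prod G z (poly_mapping.lookup p) n)"
  have "inj_on \<psi> (carrier F)"
  proof (rule inj_onI)
    fix p q assume "p \<in> carrier F" "q \<in> carrier F" "\<psi> p = \<psi> q"
    then have "poly_mapping.lookup p i = poly_mapping.lookup q i" for i
    proof (cases "i < n")
      case False
      then have "i \<notin> Poly_Mapping.keys p" "i \<notin> Poly_Mapping.keys q"
        using \<open>p \<in> carrier F\<close> \<open>q \<in> carrier F\<close> by (auto simp: F_def)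
      then show ?thesis by (simp add: in_keys_iff)
    next
      case True
      then show ?thesis
        using indep[of "poly_mapping.lookup p" "poly_mapping.lookup q"] \<open>\<psi> p = \<psi> q\<close>
        by (simp add: \<psi>_def)
    qed
    then show "p = q" by (rule poly_mapping_eqI)
  qed
  moreover have "power_prod G z a n \<in> \<psi> ` carrier F" for a
  proof
    define f where "f i = (if i < n then a i else 0)" for i
    have "finite {i. f i \<noteq> 0}" by (rule finite_subset[of _ "{..<n}"]) (auto simp: f_def)
    then show "Abs_poly_mapping f \<in> carrier F"
      by (auto simp: F_def in_keys_iff f_def split: if_splits)
    show "power_prod G z a n = \<psi> (Abs_poly_mapping f)"
      using \<open>finite {i. f i \<noteq> 0}\<close> by (simp add: \<psi>_def f_def power_prod_cong)
  qed
  then have "\<psi> ` carrier F = generate G (z ` {..<n})"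
    unfolding range_power_prod[OF z, symmetric] by (auto simp: \<psi>_def)
  ultimately have "\<psi> \<in> iso F (G\<lparr>carrier := generate G (z ` {..<n})\<rparr>)"
    using power_prod_lookup_hom[OF z] by (intro isoI) (simp_all add: bij_betw_def F_def \<psi>_def)
  then have "F \<cong> G\<lparr>carrier := generate G (z ` {..<n})\<rparr>" by (rule is_isoI)
  then show ?thesis unfolding F_def by (rule group.iso_sym[OF group_free_Abelian_group])
qed

end

lemma group_rank_le:
  assumes "S \<subseteq> H" "finite S" "generate G S = H"
  shows "group_rank G H \<le> card S"
  unfolding group_rank_def by (rule Least_le) (use assms in blast)

lemma group_rank_attained:
  assumes "S \<subseteq> H" "finite S" "generate G S = H"
  obtains S' where "S' \<subseteq> H" "finite S'" "card S' = group_rank G H" "generate G S' = H"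
proof -
  have "\<exists>S'. S' \<subseteq> H \<and> finite S' \<and> card S' = group_rank G H \<and> generate G S' = H"
    unfolding group_rank_def by (rule LeastI) (use assms in blast)
  then show ?thesis using that by blast
qed

lemma (in group) generate_subgroup_eq: "subgroup H G \<Longrightarrow> generate G H = H"
  using generate_subgroup_incl[of H H] generate.incl[of _ H G] by blast

lemma (in group) group_rank_consistent:
  assumes "subgroup H G" "K \<subseteq> H"
  shows "group_rank (G\<lparr>carrier := H\<rparr>) K = group_rank G K"
proof -
  have "generate (G\<lparr>carrier := H\<rparr>) S = generate G S" if "S \<subseteq> K" for S
    using generate_consistent[OF _ assms(1)] that assms(2) by blast
  then show ?thesis unfolding group_rank_def by (metis (no_types, lifting))
qed

lemma (in group) set_mult_generate_subset_generate_Un: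
  assumes "Y \<subseteq> carrier G" "T \<subseteq> carrier G"
  shows "generate G Y <#> generate G T \<subseteq> generate G (Y \<union> T)"
  using mono_generate[of Y "Y \<union> T"] mono_generate[of T "Y \<union> T"] assms
  unfolding set_mult_def by (auto intro: generate.eng)

context comm_group
begin

lemma additive_image_int_lattice_basis:
  fixes \<kappa> :: "'a \<Rightarrow> nat \<Rightarrow> int"
  assumes add: "\<And>a b. a \<in> carrier G \<Longrightarrow> b \<in> carrier G \<Longrightarrow> \<kappa> (a \<otimes> b) = \<kappa> a + \<kappa> b"
    and supp: "\<And>a i. a \<in> carrier G \<Longrightarrow> n \<le> i \<Longrightarrow> \<kappa> a i = 0"
    and full: "\<And>i. i < n \<Longrightarrow> \<exists>N. N \<noteq> 0 \<and> (\<lambda>j. if j = i then N else 0) \<in> \<kappa> ` carrier G"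
  obtains v where "int_lattice_basis n (\<kappa> ` carrier G) v"
proof -
  have \<kappa>_one: "\<kappa> \<one> = 0" using add[of \<one> \<one>] by simp
  have "\<exists>v. int_lattice_basis n (\<kappa> ` carrier G) v"
  proof (rule full_rank_int_lattice_has_basis)
    show "0 \<in> \<kappa> ` carrier G" using \<kappa>_one by (metis one_closed image_eqI)
    show "u + w \<in> \<kappa> ` carrier G" if "u \<in> \<kappa> ` carrier G" "w \<in> \<kappa> ` carrier G" for u w
    proof -
      from that obtain a b where "a \<in> carrier G" "b \<in> carrier G" "u = \<kappa> a" "w = \<kappa> b" by blast
      then show ?thesis using add by (intro rev_image_eqI[of "a \<otimes> b"]) simp_all
    qed
    show "- u \<in> \<kappa> ` carrier G" if "u \<in> \<kappa> ` carrier G" for u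
    proof -
      from that obtain a where "a \<in> carrier G" "u = \<kappa> a" by blast
      moreover have "\<kappa> (inv a) = - \<kappa> a" if "a \<in> carrier G"
        using add[of a "inv a"] that \<kappa>_one by (simp add: minus_unique)
      ultimately show ?thesis by (intro rev_image_eqI[of "inv a"]) simp_all
    qed
  qed (use supp full in blast)+
  then show ?thesis using that by blast
qed

context
  fixes n :: nat and \<kappa> :: "'a \<Rightarrow> nat \<Rightarrow> int" and v :: "nat \<Rightarrow> nat \<Rightarrow> int" and z :: "nat \<Rightarrow> 'a"
  assumes add: "\<And>a b. a \<in> carrier G \<Longrightarrow> b \<in> carrier G \<Longrightarrow> \<kappa> (a \<otimes> b) = \<kappa> a + \<kappa> b"
    and basis: "int_lattice_basis n (\<kappa> ` carrier G) v"
    and lift: "\<forall>i<n. z i \<in> carrier G \<and> \<kappa> (z i) = v i"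
begin

lemma lift_closed: "\<forall>i<n. z i \<in> carrier G"
  using lift by blast

lemma additive_power_prod_lift: "\<kappa> (power_prod G z a n) = int_lincomb n a v"
  using additive_power_prod[OF add lift_closed] lift by (simp add: int_lincomb_cong)

lemma power_prod_lift_independent:
  "power_prod G z a n = power_prod G z b n \<Longrightarrow> \<forall>i<n. a i = b i"
  using basis additive_power_prod_lift[of a] additive_power_prod_lift[of b]
  by (simp add: int_lattice_basis_def)

lemma generate_lift_Int_kernel: "generate G (z ` {..<n}) \<inter> {a \<in> carrier G. \<kappa> a = 0} = {\<one>}"
proof
  show "generate G (z ` {..<n}) \<inter> {a \<in> carrier G. \<kappa> a = 0} \<subseteq> {\<one>}"
  proof
    fix g assume "g \<in> generate G (z ` {..<n}) \<inter> {a \<in> carrier G. \<kappa> a = 0}"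
    then have "g \<in> range (\<lambda>a. power_prod G z a n)" "\<kappa> g = 0"
      using range_power_prod[OF lift_closed] by simp_all
    then obtain a where g: "g = power_prod G z a n" "\<kappa> g = 0" by blast
    then have "int_lincomb n a v = int_lincomb n 0 v" using additive_power_prod_lift[of a] by simp
    then have "\<forall>i<n. a i = (0 :: nat \<Rightarrow> int) i" using basis unfolding int_lattice_basis_def by blast
    then show "g \<in> {\<one>}" using g(1) power_prod_cong[of n a 0 z] by simp
  qed
  show "{\<one>} \<subseteq> generate G (z ` {..<n}) \<inter> {a \<in> carrier G. \<kappa> a = 0}"
    using generate.one add[of \<one> \<one>] by auto
qed

lemma generate_lift_set_mult_kernel:
  "generate G (z ` {..<n}) <#> {a \<in> carrier G. \<kappa> a = 0} = carrier G"
proof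
  show "generate G (z ` {..<n}) <#> {a \<in> carrier G. \<kappa> a = 0} \<subseteq> carrier G"
    using lift_closed by (intro setmult_subset_G generate_incl) auto
  show "carrier G \<subseteq> generate G (z ` {..<n}) <#> {a \<in> carrier G. \<kappa> a = 0}"
  proof
    fix w assume w: "w \<in> carrier G"
    then obtain a where a: "\<kappa> w = int_lincomb n a v" using basis by (auto simp: int_lattice_basis_def)
    let ?p = "power_prod G z a n"
    have p: "?p \<in> carrier G" "?p \<in> generate G (z ` {..<n})"
      using power_prod_closed[OF lift_closed] range_power_prod[OF lift_closed] by auto
    then have "\<kappa> (inv ?p \<otimes> w) = 0"
      using add[of "inv ?p" w] add[of "inv ?p" ?p] add[of \<one> \<one>] a w additive_power_prod_lift
      by (simp add: add.commute)
    moreover have "w = ?p \<otimes> (inv ?p \<otimes> w)" using p w by (simp add: m_assoc[symmetric])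
    ultimately show "w \<in> generate G (z ` {..<n}) <#> {a \<in> carrier G. \<kappa> a = 0}"
      using p w unfolding set_mult_def by blast
  qed
qed

end

lemma free_Abelian_complement_of_kernel:
  fixes \<kappa> :: "'a \<Rightarrow> nat \<Rightarrow> int"
  assumes add: "\<And>a b. a \<in> carrier G \<Longrightarrow> b \<in> carrier G \<Longrightarrow> \<kappa> (a \<otimes> b) = \<kappa> a + \<kappa> b"
    and supp: "\<And>a i. a \<in> carrier G \<Longrightarrow> n \<le> i \<Longrightarrow> \<kappa> a i = 0"
    and full: "\<And>i. i < n \<Longrightarrow> \<exists>N. N \<noteq> 0 \<and> (\<lambda>j. if j = i then N else 0) \<in> \<kappa> ` carrier G"
  obtains z where "\<forall>i<n. z i \<in> carrier G"
    and "G\<lparr>carrier := generate G (z ` {..<n})\<rparr> \<cong> free_Abelian_group {..<n}"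
    and "generate G (z ` {..<n}) \<inter> {a \<in> carrier G. \<kappa> a = 0} = {\<one>}"
    and "generate G (z ` {..<n}) <#> {a \<in> carrier G. \<kappa> a = 0} = carrier G"
proof -
  obtain v where v: "int_lattice_basis n (\<kappa> ` carrier G) v"
    using additive_image_int_lattice_basis[OF add supp full] .
  define z where "z i = (SOME g. g \<in> carrier G \<and> \<kappa> g = v i)" for i
  have "z i \<in> carrier G \<and> \<kappa> (z i) = v i" if "i < n" for i
  proof -
    have "v i \<in> \<kappa> ` carrier G" using v that by (simp add: int_lattice_basis_def)
    then have "\<exists>g. g \<in> carrier G \<and> \<kappa> g = v i" by auto
    then show ?thesis unfolding z_def by (rule someI_ex)
  qed
  then have z: "\<forall>i<n. z i \<in> carrier G \<and> \<kappa> (z i) = v i" by blast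
  have zc: "\<forall>i<n. z i \<in> carrier G" by (rule lift_closed[OF add v z])
  show thesis
  proof (rule that[OF zc])
    show "G\<lparr>carrier := generate G (z ` {..<n})\<rparr> \<cong> free_Abelian_group {..<n}"
      by (rule independent_power_prod_iso_free_Abelian_group[OF zc power_prod_lift_independent[OF add v z]])
    show "generate G (z ` {..<n}) \<inter> {a \<in> carrier G. \<kappa> a = 0} = {\<one>}"
      by (rule generate_lift_Int_kernel[OF add v z])
    show "generate G (z ` {..<n}) <#> {a \<in> carrier G. \<kappa> a = 0} = carrier G"
      by (rule generate_lift_set_mult_kernel[OF add v z])
  qed
qed

lemma group_rank_eq_add_kernel_rank:
  fixes \<kappa> :: "'a \<Rightarrow> nat \<Rightarrow> int"
  assumes add: "\<And>a b. a \<in> carrier G \<Longrightarrow> b \<in> carrier G \<Longrightarrow> \<kappa> (a \<otimes> b) = \<kappa> a + \<kappa> b"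
    and supp: "\<And>a i. a \<in> carrier G \<Longrightarrow> n \<le> i \<Longrightarrow> \<kappa> a i = 0"
    and full: "\<And>i. i < n \<Longrightarrow> \<exists>N. N \<noteq> 0 \<and> (\<lambda>j. if j = i then N else 0) \<in> \<kappa> ` carrier G"
    and "finite T" "T \<subseteq> {a \<in> carrier G. \<kappa> a = 0}" "generate G T = {a \<in> carrier G. \<kappa> a = 0}"
  shows "group_rank G (carrier G) = n + group_rank G {a \<in> carrier G. \<kappa> a = 0}"
proof -
  define K where "K = {a \<in> carrier G. \<kappa> a = 0}"
  obtain z where zc: "\<forall>i<n. z i \<in> carrier G"
    and "G\<lparr>carrier := generate G (z ` {..<n})\<rparr> \<cong> free_Abelian_group {..<n}"
    and "generate G (z ` {..<n}) \<inter> K = {\<one>}"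
    and split: "generate G (z ` {..<n}) <#> K = carrier G"
    unfolding K_def by (rule free_Abelian_complement_of_kernel[OF add supp full])
  obtain S\<^sub>K where S\<^sub>K: "S\<^sub>K \<subseteq> K" "finite S\<^sub>K" "card S\<^sub>K = group_rank G K" "generate G S\<^sub>K = K"
    using group_rank_attained[OF assms(5,4,6)] unfolding K_def by blast
  define U where "U = z ` {..<n} \<union> S\<^sub>K"
  have U: "U \<subseteq> carrier G" "finite U" using zc S\<^sub>K(1,2) by (auto simp: U_def K_def)
  have "card U \<le> n + group_rank G K"
    using card_Un_le[of "z ` {..<n}" S\<^sub>K] card_image_le[of "{..<n}" z] S\<^sub>K(3) by (simp add: U_def)
  moreover have gen: "generate G U = carrier G"
    using generate_incl[OF U(1)] set_mult_generate_subset_generate_Un[of "z ` {..<n}" S\<^sub>K] U(1)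
    unfolding split[symmetric] S\<^sub>K(4)[symmetric] U_def by blast
  ultimately have "group_rank G (carrier G) \<le> n + group_rank G K"
    using group_rank_le[OF U(1,2)] by fastforce
  obtain S where S: "S \<subseteq> carrier G" "finite S" "card S = group_rank G (carrier G)" "generate G S = carrier G"
    using group_rank_attained[OF U(1,2) gen] by blast
  obtain S' where S': "finite S'" "card S' + n \<le> card S" "generate G S' = K"
    using additive_vector_kernel_generated_by_fewer[OF subgroup_self add supp full S(2,1,4)]
    unfolding K_def by blast
  have "group_rank G K \<le> card S'"
    using S' generate.incl[of _ S' G] by (intro group_rank_le) auto
  with \<open>group_rank G (carrier G) \<le> n + group_rank G K\<close> show ?thesis
    using S(3) S'(2) unfolding K_def by linarith
qed

end

section \<open>The centre of a group with finite commutator subgroup\<close>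

locale free_abelianization_finite_commutator = group G for G (structure) +
  fixes x :: "nat \<Rightarrow> 'a" and n :: nat
  assumes gens_closed: "\<forall>i<n. x i \<in> carrier G"
    and generate_gens: "generate G (x ` {..<n}) = carrier G"
    and finite_derived: "finite (derived G (carrier G))"
    and free_abelianization:
      "free_abelian_basis (G Mod derived G (carrier G)) (\<lambda>i. derived G (carrier G) #> x i) n"
begin

definition abelianization_coords :: "'a \<Rightarrow> nat \<Rightarrow> int" where
  "abelianization_coords g = basis_coords (G Mod derived G (carrier G))
     (\<lambda>i. derived G (carrier G) #> x i) n (derived G (carrier G) #> g)"

abbreviation center_group where "center_group \<equiv> G\<lparr>carrier := group_center G\<rparr>"

interpretation derived: normal "derived G (carrier G)" G
  by (rule derived_self_is_normal)

interpretation center: comm_group center_group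
  by (rule comm_group_center)

lemma abelianization_coords_mult:
  "g \<in> carrier G \<Longrightarrow> h \<in> carrier G \<Longrightarrow>
    abelianization_coords (g \<otimes> h) = abelianization_coords g + abelianization_coords h"
  unfolding abelianization_coords_def by (rule derived.coset_basis_coords_mult[OF free_abelianization])

lemma center_coords_mult:
  "a \<in> carrier center_group \<Longrightarrow> b \<in> carrier center_group \<Longrightarrow>
    abelianization_coords (a \<otimes>\<^bsub>center_group\<^esub> b) = abelianization_coords a + abelianization_coords b"
  using abelianization_coords_mult subgroup.subset[OF subgroup_center] by auto

lemma center_coords_out_of_range:
  "a \<in> carrier center_group \<Longrightarrow> n \<le> i \<Longrightarrow> abelianization_coords a i = 0"
  unfolding abelianization_coords_def using subgroup.subset[OF subgroup_center]
  by (intro basis_coords_out_of_range[OF free_abelianization]) (auto simp: carrier_FactGroup)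

lemma center_coords_kernel:
  "{a \<in> carrier center_group. abelianization_coords a = 0} = group_center G \<inter> derived G (carrier G)"
  using derived.coset_basis_coords_eq_0_iff[OF free_abelianization] subgroup.subset[OF subgroup_center]
  by (auto simp: abelianization_coords_def)

lemma center_coords_full_rank:
  assumes "i < n"
  shows "\<exists>N. N \<noteq> 0 \<and> (\<lambda>j. if j = i then N else 0) \<in> abelianization_coords ` carrier center_group"
proof -
  have "\<exists>g\<in>carrier G. abelianization_coords g = (\<lambda>j. if j = i then 1 else 0)"
    unfolding abelianization_coords_def
    by (rule derived.coset_basis_coords_surj[OF free_abelianization]) (use assms in simp)
  then obtain g where g: "g \<in> carrier G" "abelianization_coords g = (\<lambda>j. if j = i then 1 else 0)" ..
  obtain k :: int where k: "k \<noteq> 0" "g [^] k \<in> group_center G"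
    using finite_derived_power_central[OF finite_derived _ _ generate_gens g(1)] gens_closed by blast
  have "abelianization_coords (g [^] k) = (\<lambda>j. if j = i then k else 0)"
    using additive_vector_int_pow[OF abelianization_coords_mult g(1)] g(2) by auto
  then have "(\<lambda>j. if j = i then k else 0) \<in> abelianization_coords ` group_center G"
    using k(2) by (metis image_eqI)
  with k(1) show ?thesis by auto
qed

lemma center_free_complement:
  "\<exists>Zt. subgroup Zt G \<and> Zt \<subseteq> group_center G
     \<and> G\<lparr>carrier := Zt\<rparr> \<cong> free_Abelian_group {..<n}
     \<and> Zt \<inter> (group_center G \<inter> derived G (carrier G)) = {\<one>}
     \<and> Zt <#> (group_center G \<inter> derived G (carrier G)) = group_center G"
proof -
  obtain z where z: "\<forall>i<n. z i \<in> group_center G"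
    and "center_group\<lparr>carrier := generate center_group (z ` {..<n})\<rparr> \<cong> free_Abelian_group {..<n}"
    and "generate center_group (z ` {..<n}) \<inter> (group_center G \<inter> derived G (carrier G)) = {\<one>}"
    and "generate center_group (z ` {..<n}) <#> (group_center G \<inter> derived G (carrier G)) = group_center G"
    using center.free_Abelian_complement_of_kernel[OF center_coords_mult center_coords_out_of_range
        center_coords_full_rank]
    unfolding center_coords_kernel by auto
  moreover have "generate center_group (z ` {..<n}) = generate G (z ` {..<n})"
    using z by (intro generate_consistent subgroup_center) auto
  moreover have "generate G (z ` {..<n}) \<subseteq> group_center G"
    using z by (intro generate_subgroup_incl subgroup_center) auto
  moreover have "subgroup (generate G (z ` {..<n})) G"
    using z subgroup.subset[OF subgroup_center] by (intro generate_is_subgroup) auto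
  ultimately show ?thesis by (intro exI[of _ "generate G (z ` {..<n})"]) auto
qed

lemma center_rank:
  "group_rank G (group_center G) = n + group_rank G (group_center G \<inter> derived G (carrier G))"
proof -
  let ?K = "group_center G \<inter> derived G (carrier G)"
  have "subgroup ?K center_group"
    unfolding center_coords_kernel[symmetric]
    by (rule center.additive_kernel_subgroup[OF center.subgroup_self center_coords_mult])
  then have "generate center_group ?K = ?K" by (rule center.generate_subgroup_eq)
  then have "group_rank center_group (carrier center_group) = n + group_rank center_group ?K"
    using center.group_rank_eq_add_kernel_rank[OF center_coords_mult center_coords_out_of_range
        center_coords_full_rank, where T = ?K] finite_derived
    unfolding center_coords_kernel by simp
  then show ?thesis using group_rank_consistent[OF subgroup_center] by simp
qed

end

theorem proposition5:
  fixes G (structure) and x :: "nat \<Rightarrow> 'a" and n :: nat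
  assumes "group G"
    and "\<forall>i<n. x i \<in> carrier G"
    and "generate G (x ` {..<n}) = carrier G"
    and "finite (derived G (carrier G))"
    and "free_abelian_basis (G Mod (derived G (carrier G)))
           (\<lambda>i. derived G (carrier G) #> x i) n"
  shows "(\<exists>Zt. subgroup Zt G \<and> Zt \<subseteq> group_center G
           \<and> G\<lparr>carrier := Zt\<rparr> \<cong> free_Abelian_group {..<n}
           \<and> Zt \<inter> (group_center G \<inter> derived G (carrier G)) = {\<one>}
           \<and> Zt <#> (group_center G \<inter> derived G (carrier G)) = group_center G)
         \<and> group_rank G (group_center G)
           = n + group_rank G (group_center G \<inter> derived G (carrier G))"
proof -
  interpret free_abelianization_finite_commutator G x n
    using assms by (simp add: free_abelianization_finite_commutator_def
        free_abelianization_finite_commutator_axioms_def)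
  show ?thesis using center_free_complement center_rank by blast
qed

end
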